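(* Let $M$ be a von Neumann algebra, $\varphi\colon M\to M$ a normal UCP map, $M^\varphi=\{x\in M:\varphi(x)=x\}$, and let $\psi\colon M\to M$ be a UCP idempotent with range $M^\varphi$ such that $\varphi\circ\psi=\psi\circ\varphi=\psi$ and $\psi(x)=x$ for all $x\in M^\varphi$. Equip $M^\varphi$ with the Choi–Effros product $x\circ y:=\psi(xy)$, making it a $C^*$-algebra $H^\infty(M,\varphi)$, and let $\mathrm{mult}(\psi)=\{y\in M:\psi(y^*y)=\psi(y)^*\circ\psi(y)\text{ and }\psi(yy^* )=\psi(y)\circ\psi(y)^*\}$ be the multiplicative domain of $\psi$ viewed as a UCP map $M\to H^\infty(M,\varphi)$. Then $M^\varphi\subseteq\mathrm{mult}(\psi)$ and $\varphi(\mathrm{mult}(\psi))\subseteq\mathrm{mult}(\psi)$.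
   Context: Such a $\psi$ exists, e.g. as a BW-limit point of the Cesàro averages $\frac{1}{m+1}\sum_{k=0}^m\varphi^k$. The identity map $M^\varphi\to H^\infty(M,\varphi)$ is a complete order isomorphism; $H^\infty(M,\varphi)$ is called the non-commutative Poisson boundary of $\varphi$. *)

theory Defs
  imports Complex_Main
begin

class chilbert = ab_group_add +
  fixes scaleC :: "complex \<Rightarrow> 'a \<Rightarrow> 'a"
    and cinner :: "'a \<Rightarrow> 'a \<Rightarrow> complex"
  assumes scaleC_add_right: "scaleC c (x + y) = scaleC c x + scaleC c y"
    and scaleC_add_left: "scaleC (c + d) x = scaleC c x + scaleC d x"
    and scaleC_scaleC: "scaleC c (scaleC d x) = scaleC (c * d) x"
    and scaleC_one: "scaleC 1 x = x"
    and cinner_commute: "cinner x y = cnj (cinner y x)"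
    and cinner_add_right: "cinner x (y + z) = cinner x y + cinner x z"
    and cinner_scaleC_right: "cinner x (scaleC c y) = c * cinner x y"
    and cinner_ge_zero: "0 \<le> Re (cinner x x)"
    and cinner_eq_zero: "cinner x x = 0 \<Longrightarrow> x = 0"
    and complete:
      "(\<forall>e>0. \<exists>N. \<forall>m\<ge>N. \<forall>n\<ge>N. sqrt (Re (cinner (X m - X n) (X m - X n))) < e)
        \<Longrightarrow> (\<exists>L. (\<lambda>n. sqrt (Re (cinner (X n - L) (X n - L)))) \<longlonglongrightarrow> 0)"

definition cnorm :: "'a::chilbert \<Rightarrow> real" where
  "cnorm x = sqrt (Re (cinner x x))"

definition bounded_op :: "('a::chilbert \<Rightarrow> 'a) \<Rightarrow> bool" where
  "bounded_op T \<longleftrightarrow> (\<forall>x y. T (x + y) = T x + T y) \<and> (\<forall>c x. T (scaleC c x) = scaleC c (T x))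
     \<and> (\<exists>K. \<forall>x. cnorm (T x) \<le> K * cnorm x)"

definition adj :: "('a::chilbert \<Rightarrow> 'a) \<Rightarrow> ('a \<Rightarrow> 'a)" where
  "adj T = (THE S. \<forall>x y. cinner (T x) y = cinner x (S y))"

definition op_add :: "('a::chilbert \<Rightarrow> 'a) \<Rightarrow> ('a \<Rightarrow> 'a) \<Rightarrow> ('a \<Rightarrow> 'a)" where
  "op_add S T = (\<lambda>x. S x + T x)"

definition op_diff :: "('a::chilbert \<Rightarrow> 'a) \<Rightarrow> ('a \<Rightarrow> 'a) \<Rightarrow> ('a \<Rightarrow> 'a)" where
  "op_diff S T = (\<lambda>x. S x - T x)"

definition op_scale :: "complex \<Rightarrow> ('a::chilbert \<Rightarrow> 'a) \<Rightarrow> ('a \<Rightarrow> 'a)" where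
  "op_scale c T = (\<lambda>x. scaleC c (T x))"

definition op_pos :: "('a::chilbert \<Rightarrow> 'a) \<Rightarrow> bool" where
  "op_pos T \<longleftrightarrow> (\<forall>h. Im (cinner h (T h)) = 0 \<and> 0 \<le> Re (cinner h (T h)))"

definition op_le :: "('a::chilbert \<Rightarrow> 'a) \<Rightarrow> ('a \<Rightarrow> 'a) \<Rightarrow> bool" where
  "op_le S T \<longleftrightarrow> op_pos (op_diff T S)"

text \<open>Positivity of an n x n operator matrix, i.e. of an operator on \<open>H^n\<close>.\<close>
definition mat_pos :: "nat \<Rightarrow> (nat \<Rightarrow> nat \<Rightarrow> ('a::chilbert \<Rightarrow> 'a)) \<Rightarrow> bool" where
  "mat_pos n X \<longleftrightarrow> (\<forall>h :: nat \<Rightarrow> 'a.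
      Im (\<Sum>i<n. \<Sum>j<n. cinner (h i) (X i j (h j))) = 0 \<and>
      0 \<le> Re (\<Sum>i<n. \<Sum>j<n. cinner (h i) (X i j (h j))))"

definition commutant :: "('a::chilbert \<Rightarrow> 'a) set \<Rightarrow> ('a \<Rightarrow> 'a) set" where
  "commutant S = {T. bounded_op T \<and> (\<forall>s\<in>S. T \<circ> s = s \<circ> T)}"

definition von_neumann_algebra :: "('a::chilbert \<Rightarrow> 'a) set \<Rightarrow> bool" where
  "von_neumann_algebra M \<longleftrightarrow>
     M \<subseteq> {T. bounded_op T} \<and> id \<in> M \<and>
     (\<forall>x\<in>M. \<forall>y\<in>M. op_add x y \<in> M \<and> x \<circ> y \<in> M) \<and>
     (\<forall>c. \<forall>x\<in>M. op_scale c x \<in> M) \<and>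
     (\<forall>x\<in>M. adj x \<in> M) \<and>
     M = commutant (commutant M)"

definition linear_on :: "('a::chilbert \<Rightarrow> 'a) set \<Rightarrow> (('a \<Rightarrow> 'a) \<Rightarrow> ('a \<Rightarrow> 'a)) \<Rightarrow> bool" where
  "linear_on M f \<longleftrightarrow> (\<forall>x\<in>M. \<forall>y\<in>M. f (op_add x y) = op_add (f x) (f y)) \<and>
                     (\<forall>c. \<forall>x\<in>M. f (op_scale c x) = op_scale c (f x))"

definition completely_positive_on :: "('a::chilbert \<Rightarrow> 'a) set \<Rightarrow> (('a \<Rightarrow> 'a) \<Rightarrow> ('a \<Rightarrow> 'a)) \<Rightarrow> bool" where
  "completely_positive_on M f \<longleftrightarrow>
     (\<forall>n X. (\<forall>i<n. \<forall>j<n. X i j \<in> M) \<and> mat_pos n X \<longrightarrow> mat_pos n (\<lambda>i j. f (X i j)))"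

definition ucp_on :: "('a::chilbert \<Rightarrow> 'a) set \<Rightarrow> (('a \<Rightarrow> 'a) \<Rightarrow> ('a \<Rightarrow> 'a)) \<Rightarrow> bool" where
  "ucp_on M f \<longleftrightarrow> f ` M \<subseteq> M \<and> linear_on M f \<and> f id = id \<and> completely_positive_on M f"

definition is_lub_op :: "('a::chilbert \<Rightarrow> 'a) set \<Rightarrow> ('a \<Rightarrow> 'a) \<Rightarrow> bool" where
  "is_lub_op D x \<longleftrightarrow> (\<forall>a\<in>D. op_le a x) \<and>
     (\<forall>y. bounded_op y \<and> (\<forall>a\<in>D. op_le a y) \<longrightarrow> op_le x y)"

text \<open>Normal positive map: preserves suprema of bounded increasing nets
  (upward directed families) of self-adjoint elements.\<close>
definition normal_on :: "('a::chilbert \<Rightarrow> 'a) set \<Rightarrow> (('a \<Rightarrow> 'a) \<Rightarrow> ('a \<Rightarrow> 'a)) \<Rightarrow> bool" where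
  "normal_on M f \<longleftrightarrow>
     (\<forall>D x. D \<noteq> {} \<and> D \<subseteq> M \<and> (\<forall>a\<in>D. adj a = a) \<and>
        (\<forall>a\<in>D. \<forall>b\<in>D. \<exists>c\<in>D. op_le a c \<and> op_le b c) \<and> is_lub_op D x
        \<longrightarrow> is_lub_op (f ` D) (f x))"

definition fixed_points :: "('a::chilbert \<Rightarrow> 'a) set \<Rightarrow> (('a \<Rightarrow> 'a) \<Rightarrow> ('a \<Rightarrow> 'a)) \<Rightarrow> ('a \<Rightarrow> 'a) set" where
  "fixed_points M f = {x\<in>M. f x = x}"

text \<open>Multiplicative domain of \<open>\<psi>\<close> viewed as a UCP map into \<open>H^\<infinity>(M,\<phi>)\<close>, whose
  product is the Choi--Effros product \<open>x \<circ> y = \<psi>(xy)\<close> and whose involution is the adjoint.\<close>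
definition ce_prod :: "(('a::chilbert \<Rightarrow> 'a) \<Rightarrow> ('a \<Rightarrow> 'a)) \<Rightarrow> ('a \<Rightarrow> 'a) \<Rightarrow> ('a \<Rightarrow> 'a) \<Rightarrow> ('a \<Rightarrow> 'a)" where
  "ce_prod \<psi> x y = \<psi> (x \<circ> y)"

definition mult_dom :: "('a::chilbert \<Rightarrow> 'a) set \<Rightarrow> (('a \<Rightarrow> 'a) \<Rightarrow> ('a \<Rightarrow> 'a)) \<Rightarrow> ('a \<Rightarrow> 'a) set" where
  "mult_dom M \<psi> = {y\<in>M. \<psi> (adj y \<circ> y) = ce_prod \<psi> (adj (\<psi> y)) (\<psi> y) \<and>
                         \<psi> (y \<circ> adj y) = ce_prod \<psi> (\<psi> y) (adj (\<psi> y))}"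

end

theory Submission
  imports Defs
begin

text \<open>The engine is the Kadison--Schwarz inequality \<open>f(x)\<^sup>*f(x) \<le> f(x\<^sup>*x)\<close> for UCP maps \<open>f\<close>,
  obtained by applying complete positivity to the positive matrix \<open>[[x\<^sup>*x, x\<^sup>*], [x, 1]]\<close>.
  For \<open>y\<close> in the multiplicative domain and \<open>z = \<phi>(y)\<close> we have \<open>\<psi>(z) = \<psi>(y)\<close>, hence
  \<open>\<psi>(\<psi>(y)\<^sup>*\<psi>(y)) = \<psi>(\<psi>(z)\<^sup>*\<psi>(z)) \<le> \<psi>(z\<^sup>*z) \<le> \<psi>(\<phi>(y\<^sup>*y)) = \<psi>(y\<^sup>*y) = \<psi>(\<psi>(y)\<^sup>*\<psi>(y))\<close>,
  so equality holds throughout; applying this to \<open>y\<^sup>*\<close> gives the second defining identity.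
  Fixed points lie in the domain since \<open>\<psi>\<close> is the identity on them.

  Since \<open>adj\<close> is defined by a description, every use of the adjoint relation needs its existence,
  i.e.\ the Riesz representation theorem.\<close>

section \<open>Inner product spaces\<close>

lemma scaleC_zero_left [simp]: "scaleC 0 (x::'a::chilbert) = 0"
proof -
  have "scaleC 0 x = scaleC 0 x + scaleC 0 x" by (metis add_0 scaleC_add_left)
  then show ?thesis by simp
qed

lemma scaleC_minus1_left: "scaleC (-1) (x::'a::chilbert) = - x"
proof -
  have "scaleC 1 x + scaleC (-1) x = 0" by (metis scaleC_add_left scaleC_zero_left add.right_inverse)
  then show ?thesis by (simp add: scaleC_one add_eq_0_iff)
qed

lemma scaleC_zero_right [simp]: "scaleC c (0::'a::chilbert) = 0"
proof -
  have "scaleC c (0::'a) = scaleC c 0 + scaleC c 0" by (metis add_0 scaleC_add_right)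
  then show ?thesis by simp
qed

lemma scaleC_minus_right: "scaleC c (- (x::'a::chilbert)) = - scaleC c x"
  by (metis add.right_inverse add_eq_0_iff scaleC_add_right scaleC_zero_right)

lemma scaleC_diff_right: "scaleC c ((x::'a::chilbert) - y) = scaleC c x - scaleC c y"
  by (metis diff_conv_add_uminus scaleC_add_right scaleC_minus_right)

lemma cinner_zero_right [simp]: "cinner (x::'a::chilbert) 0 = 0"
  by (metis add_0 add_cancel_right_right cinner_add_right)

lemma cinner_zero_left [simp]: "cinner 0 (x::'a::chilbert) = 0"
  by (metis cinner_commute cinner_zero_right complex_cnj_zero)

lemma cinner_minus_right: "cinner (x::'a::chilbert) (- y) = - cinner x y"
  by (metis add.right_inverse add_eq_0_iff cinner_add_right cinner_zero_right)

lemma cinner_diff_right: "cinner (x::'a::chilbert) (y - z) = cinner x y - cinner x z"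
  by (metis cinner_add_right cinner_minus_right diff_conv_add_uminus)

lemma cinner_add_left: "cinner ((x::'a::chilbert) + y) z = cinner x z + cinner y z"
  by (metis cinner_add_right cinner_commute complex_cnj_add)

lemma cinner_scaleC_left: "cinner (scaleC c (x::'a::chilbert)) y = cnj c * cinner x y"
  by (metis cinner_commute cinner_scaleC_right complex_cnj_cnj complex_cnj_mult)

lemma cinner_minus_left: "cinner (- (x::'a::chilbert)) y = - cinner x y"
  by (metis cinner_commute cinner_minus_right complex_cnj_minus)

lemma Re_cinner_commute: "Re (cinner (x::'a::chilbert) y) = Re (cinner y x)"
  by (subst cinner_commute) simp

lemma cinner_eqI: "(\<And>x. cinner x a = cinner x b) \<Longrightarrow> (a::'a::chilbert) = b"
  using cinner_eq_zero[of "a - b"] by (simp add: cinner_diff_right)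

definition sq_cnorm :: "'a::chilbert \<Rightarrow> real" where
  "sq_cnorm x = Re (cinner x x)"

lemma sq_cnorm_eq_cnorm_power2: "sq_cnorm x = (cnorm x)\<^sup>2"
  unfolding cnorm_def sq_cnorm_def by (simp add: cinner_ge_zero)

lemma sq_cnorm_nonneg: "0 \<le> sq_cnorm x"
  by (simp add: sq_cnorm_def cinner_ge_zero)

lemma cinner_self: "cinner x x = complex_of_real (sq_cnorm x)"
  by (simp add: sq_cnorm_def complex_eq_iff)
    (metis cinner_commute complex_cnj_cancel_iff complex_is_Real_iff Reals_cnj_iff)

lemma sq_cnorm_add_scaleC_real:
  "sq_cnorm (a + scaleC (complex_of_real t) b) = sq_cnorm a + 2 * t * Re (cinner a b) + t\<^sup>2 * sq_cnorm b"
proof -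
  have "cinner (a + scaleC (complex_of_real t) b) (a + scaleC (complex_of_real t) b)
     = cinner a a + complex_of_real t * cinner a b + complex_of_real t * cinner b a
       + complex_of_real t * complex_of_real t * cinner b b"
    by (simp add: cinner_add_left cinner_add_right cinner_scaleC_left cinner_scaleC_right algebra_simps)
  then show ?thesis
    by (simp add: sq_cnorm_def Re_cinner_commute[of b a] power2_eq_square algebra_simps)
qed

lemma parallelogram_law: "sq_cnorm (a + b) + sq_cnorm (a - b) = 2 * sq_cnorm a + 2 * sq_cnorm b"
  using sq_cnorm_add_scaleC_real[of a 1 b] sq_cnorm_add_scaleC_real[of a "-1" b]
  by (simp add: scaleC_one scaleC_minus1_left)

lemma discriminant_nonpos:
  fixes A B r :: real
  assumes nonneg: "\<And>t. 0 \<le> A + 2 * t * r + t\<^sup>2 * B" and "0 \<le> B"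
  shows "r\<^sup>2 \<le> A * B"
proof (cases "B = 0")
  case True
  show ?thesis
  proof (rule ccontr)
    assume "\<not> ?thesis"
    with True have "r \<noteq> 0" by simp
    have "0 \<le> A + 2 * (-(A+1)/(2*r)) * r + (-(A+1)/(2*r))\<^sup>2 * B" by (rule nonneg)
    also have "\<dots> = -1" using \<open>r \<noteq> 0\<close> True by (simp add: field_simps)
    finally show False by simp
  qed
next
  case False
  with \<open>0 \<le> B\<close> have B: "B > 0" by simp
  have "0 \<le> A + 2 * (-r/B) * r + (-r/B)\<^sup>2 * B" by (rule nonneg)
  also have "\<dots> = A - r\<^sup>2 / B" using B by (simp add: field_simps power2_eq_square)
  finally show ?thesis using B by (simp add: field_simps mult.commute)
qed

lemma cauchy_schwarz_Re: "(Re (cinner a b))\<^sup>2 \<le> sq_cnorm a * sq_cnorm b"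
proof (rule discriminant_nonpos)
  show "0 \<le> sq_cnorm a + 2 * t * Re (cinner a b) + t\<^sup>2 * sq_cnorm b" for t
    by (metis sq_cnorm_add_scaleC_real sq_cnorm_nonneg)
qed (rule sq_cnorm_nonneg)

lemma abs_le_sqrt_mult: "(r::real)\<^sup>2 \<le> A * B \<Longrightarrow> 0 \<le> A \<Longrightarrow> 0 \<le> B \<Longrightarrow> \<bar>r\<bar> \<le> sqrt A * sqrt B"
  by (metis real_sqrt_abs real_sqrt_le_mono real_sqrt_mult)

lemma two_abs_le_add_if_sq_le_mult:
  fixes r a b :: real
  assumes "r\<^sup>2 \<le> a * b" "0 \<le> a" "0 \<le> b"
  shows "2 * \<bar>r\<bar> \<le> a + b"
proof -
  have "0 \<le> (a - b)\<^sup>2" by simp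
  then have "(2 * r)\<^sup>2 \<le> (a + b)\<^sup>2" using assms(1) by (simp add: power2_eq_square algebra_simps)
  then show ?thesis using assms(2,3) abs_le_square_iff[of "2 * r" "a + b"] by (simp add: abs_mult)
qed

section \<open>Riesz representation and adjoints\<close>

locale bounded_cfunctional =
  fixes g :: "'a::chilbert \<Rightarrow> complex" and C :: real
  assumes g_add: "g (a + b) = g a + g b"
    and g_scaleC: "g (scaleC c a) = c * g a"
    and Re_g_bound: "(Re (g u))\<^sup>2 \<le> C * sq_cnorm u"
    and bound_nonneg: "0 \<le> C"
begin

text \<open>Riesz representation by Dirichlet's principle: the representing vector is the minimizer of
  \<open>energy\<close>, whose existence comes from the parallelogram law and completeness.\<close>

definition energy :: "'a \<Rightarrow> real" where
  "energy u = sq_cnorm u - 2 * Re (g u)"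

lemma energy_lower_bound: "- C \<le> energy u"
  using two_abs_le_add_if_sq_le_mult[OF Re_g_bound bound_nonneg sq_cnorm_nonneg, of u]
    abs_ge_self[of "Re (g u)"]
  unfolding energy_def by linarith

lemma sq_cnorm_diff_le_energy:
  assumes m: "\<And>u. m \<le> energy u"
  shows "sq_cnorm (a - b) \<le> 2 * (energy a - m) + 2 * (energy b - m)"
proof -
  define mid where "mid = scaleC (complex_of_real (1/2)) (a + b)"
  have "sq_cnorm mid = sq_cnorm (a + b) / 4"
    using sq_cnorm_add_scaleC_real[of 0 "1/2" "a + b"] by (simp add: mid_def power2_eq_square sq_cnorm_def)
  moreover have "Re (g mid) = (Re (g a) + Re (g b)) / 2"
    by (simp add: mid_def g_scaleC g_add)
  ultimately have "energy mid = sq_cnorm (a + b) / 4 - Re (g a) - Re (g b)"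
    by (simp add: energy_def field_simps)
  with m[of mid] parallelogram_law[of a b] show ?thesis
    by (simp add: energy_def algebra_simps)
qed

lemma minimizing_sequence_Cauchy:
  assumes m: "\<And>u. m \<le> energy u" and x: "\<And>n. energy (x n) < m + 1 / (real n + 1)"
  shows "\<forall>e>0. \<exists>N. \<forall>p\<ge>N. \<forall>q\<ge>N. sqrt (Re (cinner (x p - x q) (x p - x q))) < e"
proof (intro allI impI)
  fix e :: real assume "e > 0"
  obtain N :: nat where "4 / e\<^sup>2 < real N"
    using reals_Archimedean2 by blast
  then have "4 / e\<^sup>2 < real N + 1" by linarith
  then have N: "4 / (real N + 1) < e\<^sup>2" using \<open>e > 0\<close> by (simp add: field_simps)
  show "\<exists>N. \<forall>p\<ge>N. \<forall>q\<ge>N. sqrt (Re (cinner (x p - x q) (x p - x q))) < e"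
  proof (intro exI allI impI)
    fix p q assume "N \<le> p" "N \<le> q"
    then have "1 / (real p + 1) \<le> 1 / (real N + 1)" "1 / (real q + 1) \<le> 1 / (real N + 1)"
      by (simp_all add: frac_le)
    with x[of p] x[of q] sq_cnorm_diff_le_energy[OF m, of "x p" "x q"]
    have "sq_cnorm (x p - x q) < 4 / (real N + 1)" by simp
    with N have "sq_cnorm (x p - x q) < e\<^sup>2" by simp
    then have "sqrt (sq_cnorm (x p - x q)) < sqrt (e\<^sup>2)"
      by (rule real_sqrt_less_mono)
    then have "sqrt (sq_cnorm (x p - x q)) < e"
      using \<open>e > 0\<close> by simp
    then show "sqrt (Re (cinner (x p - x q) (x p - x q))) < e" by (simp add: sq_cnorm_def)
  qed
qed

lemma energy_le_nearby:
  "energy L \<le> energy (L + e) + (2 * sqrt (sq_cnorm L) + 2 * sqrt C) * sqrt (sq_cnorm e)"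
proof -
  have "energy (L + e) = energy L + 2 * Re (cinner L e) + sq_cnorm e - 2 * Re (g e)"
    using sq_cnorm_add_scaleC_real[of L 1 e] by (simp add: energy_def g_add scaleC_one)
  moreover have "\<bar>Re (cinner L e)\<bar> \<le> sqrt (sq_cnorm L) * sqrt (sq_cnorm e)"
    by (rule abs_le_sqrt_mult[OF cauchy_schwarz_Re sq_cnorm_nonneg sq_cnorm_nonneg])
  moreover have "\<bar>Re (g e)\<bar> \<le> sqrt C * sqrt (sq_cnorm e)"
    by (rule abs_le_sqrt_mult[OF Re_g_bound bound_nonneg sq_cnorm_nonneg])
  ultimately show ?thesis
    using sq_cnorm_nonneg[of e] by (simp add: algebra_simps)
qed

lemma energy_minimizer_exists: "\<exists>L. \<forall>u. energy L \<le> energy u"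
proof -
  define m where "m = Inf (range energy)"
  have "bdd_below (range energy)"
    using energy_lower_bound by (metis bdd_belowI2)
  then have m_le: "m \<le> energy u" for u
    unfolding m_def by (simp add: cInf_lower)
  have "\<exists>u. energy u < m + 1 / (real n + 1)" for n
    using cInf_lessD[of "range energy" "m + 1 / (real n + 1)"] unfolding m_def by auto
  then obtain x where x: "\<And>n. energy (x n) < m + 1 / (real n + 1)" by metis
  obtain L where "(\<lambda>n. sqrt (Re (cinner (x n - L) (x n - L)))) \<longlonglongrightarrow> 0"
    using complete[OF minimizing_sequence_Cauchy[OF m_le x]] by blast
  then have dist: "(\<lambda>n. sqrt (sq_cnorm (x n - L))) \<longlonglongrightarrow> 0" by (simp add: sq_cnorm_def)
  define D where "D = 2 * sqrt (sq_cnorm L) + 2 * sqrt C"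
  have near: "energy L \<le> m + 1 / (real n + 1) + D * sqrt (sq_cnorm (x n - L))" for n
    using energy_le_nearby[of L "x n - L"] x[of n] by (simp add: D_def)
  have "(\<lambda>n. 1 / (real n + 1)) \<longlonglongrightarrow> 0"
    using LIMSEQ_inverse_real_of_nat by (simp add: inverse_eq_divide add.commute)
  then have "(\<lambda>n. m + 1 / (real n + 1) + D * sqrt (sq_cnorm (x n - L))) \<longlonglongrightarrow> m + 0 + D * 0"
    by (intro tendsto_intros dist)
  then have "energy L \<le> m"
    using LIMSEQ_le_const[of _ _ "energy L"] near by auto
  then show ?thesis using m_le by (meson order_trans)
qed

lemma cinner_energy_minimizer:
  assumes min: "\<And>u. energy L \<le> energy u"
  shows "cinner L d = g d"
proof -
  have Re_eq: "Re (cinner L d) = Re (g d)" for d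
  proof -
    have "0 \<le> 0 + 2 * t * (Re (cinner L d) - Re (g d)) + t\<^sup>2 * sq_cnorm d" for t
      using min[of "L + scaleC (complex_of_real t) d"] sq_cnorm_add_scaleC_real[of L t d]
      by (simp add: energy_def g_add g_scaleC algebra_simps)
    from discriminant_nonpos[OF this sq_cnorm_nonneg] show ?thesis by simp
  qed
  show ?thesis
  proof (rule complex_eqI)
    show "Re (cinner L d) = Re (g d)" by (rule Re_eq)
    show "Im (cinner L d) = Im (g d)"
      using Re_eq[of "scaleC \<i> d"] by (simp add: cinner_scaleC_right g_scaleC)
  qed
qed

theorem riesz_representation: "\<exists>w. \<forall>u. g u = cinner w u"
  using energy_minimizer_exists cinner_energy_minimizer by metis

end

lemma bounded_op_add: "bounded_op T \<Longrightarrow> T (x + y) = T x + T y"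
  by (simp add: bounded_op_def)

lemma bounded_op_scaleC: "bounded_op T \<Longrightarrow> T (scaleC c x) = scaleC c (T x)"
  by (simp add: bounded_op_def)

lemma bounded_op_zero: "bounded_op T \<Longrightarrow> T 0 = 0"
  by (metis add_cancel_right_right bounded_op_add)

lemma bounded_op_sq_cnorm_bound:
  assumes "bounded_op T"
  obtains K where "0 \<le> K" "\<And>x. sq_cnorm (T x) \<le> K * sq_cnorm x"
proof -
  obtain K where K: "\<And>x. cnorm (T x) \<le> K * cnorm x"
    using assms unfolding bounded_op_def by blast
  have "sq_cnorm (T x) \<le> (max K 0)\<^sup>2 * sq_cnorm x" for x
  proof -
    have "0 \<le> cnorm (T x)" "0 \<le> cnorm x" by (simp_all add: cnorm_def cinner_ge_zero)
    moreover from this have "cnorm (T x) \<le> max K 0 * cnorm x"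
      using K[of x] by (smt (verit) mult_right_mono)
    ultimately have "(cnorm (T x))\<^sup>2 \<le> (max K 0 * cnorm x)\<^sup>2" by (simp add: power_mono)
    then show ?thesis by (simp add: sq_cnorm_eq_cnorm_power2 power_mult_distrib)
  qed
  then show ?thesis using that[of "(max K 0)\<^sup>2"] by simp
qed

lemma bounded_op_cinner_representable:
  assumes T: "bounded_op T"
  shows "\<exists>w. \<forall>u. cinner v (T u) = cinner w u"
proof -
  obtain K where K: "0 \<le> K" "\<And>x. sq_cnorm (T x) \<le> K * sq_cnorm x"
    using bounded_op_sq_cnorm_bound[OF T] by blast
  interpret bounded_cfunctional "\<lambda>u. cinner v (T u)" "sq_cnorm v * K"
  proof
    show "(Re (cinner v (T u)))\<^sup>2 \<le> sq_cnorm v * K * sq_cnorm u" for u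
      using cauchy_schwarz_Re[of v "T u"] mult_left_mono[OF K(2)[of u] sq_cnorm_nonneg[of v]]
      by (simp add: mult.assoc)
  qed (simp_all add: T bounded_op_add bounded_op_scaleC cinner_add_right cinner_scaleC_right
      sq_cnorm_nonneg K)
  show ?thesis using riesz_representation by metis
qed

lemma adj_unique:
  assumes "\<And>x y. cinner (T x) y = cinner x (S y)"
  shows "adj T = (S :: 'a::chilbert \<Rightarrow> 'a)"
  unfolding adj_def
proof (rule the_equality)
  show "\<forall>x y. cinner (T x) y = cinner x (S y)" using assms by blast
  fix S' assume S': "\<forall>x y. cinner (T x) y = cinner x (S' y)"
  show "S' = S"
  proof
    fix y
    show "S' y = S y"
      by (rule cinner_eqI) (rule trans[OF S'[rule_format, symmetric] assms])
  qed
qed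

lemma cinner_adj_right:
  assumes "bounded_op (T::'a::chilbert \<Rightarrow> 'a)"
  shows "cinner (T x) y = cinner x (adj T y)"
proof -
  define S where "S y = (SOME w. \<forall>u. cinner y (T u) = cinner w u)" for y
  have S: "\<forall>u. cinner y (T u) = cinner (S y) u" for y
    unfolding S_def by (rule someI_ex) (rule bounded_op_cinner_representable[OF assms])
  have rep: "cinner (T x) y = cinner x (S y)" for x y
    using S[of y] cinner_commute[of "T x" y] cinner_commute[of x "S y"] by simp
  then have "adj T = S" by (rule adj_unique)
  with rep show ?thesis by simp
qed

lemma cinner_adj_left:
  assumes "bounded_op (T::'a::chilbert \<Rightarrow> 'a)"
  shows "cinner x (T y) = cinner (adj T x) y"
  using cinner_adj_right[OF assms, of y x] cinner_commute[of x "T y"] cinner_commute[of y "adj T x"]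
  by simp

lemma adj_adj:
  assumes "bounded_op (T::'a::chilbert \<Rightarrow> 'a)"
  shows "adj (adj T) = T"
  by (rule adj_unique) (rule cinner_adj_left[OF assms, symmetric])

section \<open>Positivity and UCP maps\<close>

lemma vn_bounded: "von_neumann_algebra M \<Longrightarrow> x \<in> M \<Longrightarrow> bounded_op x"
  unfolding von_neumann_algebra_def by blast

lemma vn_id: "von_neumann_algebra M \<Longrightarrow> id \<in> M"
  unfolding von_neumann_algebra_def by blast

lemma vn_add: "von_neumann_algebra M \<Longrightarrow> x \<in> M \<Longrightarrow> y \<in> M \<Longrightarrow> op_add x y \<in> M"
  unfolding von_neumann_algebra_def by blast

lemma vn_comp: "von_neumann_algebra M \<Longrightarrow> x \<in> M \<Longrightarrow> y \<in> M \<Longrightarrow> x \<circ> y \<in> M"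
  unfolding von_neumann_algebra_def by blast

lemma vn_scale: "von_neumann_algebra M \<Longrightarrow> x \<in> M \<Longrightarrow> op_scale c x \<in> M"
  unfolding von_neumann_algebra_def by blast

lemma vn_adj: "von_neumann_algebra M \<Longrightarrow> x \<in> M \<Longrightarrow> adj x \<in> M"
  unfolding von_neumann_algebra_def by blast

lemma op_diff_eq_op_add: "op_diff x y = op_add x (op_scale (-1) (y::'a::chilbert \<Rightarrow> 'a))"
  by (simp add: op_diff_def op_add_def op_scale_def scaleC_minus1_left fun_eq_iff)

lemma vn_diff: "von_neumann_algebra M \<Longrightarrow> x \<in> M \<Longrightarrow> y \<in> M \<Longrightarrow> op_diff x y \<in> M"
  unfolding op_diff_eq_op_add by (intro vn_add vn_scale)

lemma ucp_on_mem: "ucp_on M f \<Longrightarrow> x \<in> M \<Longrightarrow> f x \<in> M"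
  unfolding ucp_on_def by blast

lemma ucp_on_id: "ucp_on M f \<Longrightarrow> f id = id"
  unfolding ucp_on_def by blast

lemma ucp_on_completely_positive: "ucp_on M f \<Longrightarrow> completely_positive_on M f"
  unfolding ucp_on_def by blast

lemma ucp_on_add: "ucp_on M f \<Longrightarrow> x \<in> M \<Longrightarrow> y \<in> M \<Longrightarrow> f (op_add x y) = op_add (f x) (f y)"
  unfolding ucp_on_def linear_on_def by blast

lemma ucp_on_scale: "ucp_on M f \<Longrightarrow> x \<in> M \<Longrightarrow> f (op_scale c x) = op_scale c (f x)"
  unfolding ucp_on_def linear_on_def by blast

lemma ucp_on_diff:
  "von_neumann_algebra M \<Longrightarrow> ucp_on M f \<Longrightarrow> x \<in> M \<Longrightarrow> y \<in> M \<Longrightarrow> f (op_diff x y) = op_diff (f x) (f y)"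
  unfolding op_diff_eq_op_add by (simp add: ucp_on_add ucp_on_scale vn_scale)

definition mat2 :: "'b \<Rightarrow> 'b \<Rightarrow> 'b \<Rightarrow> 'b \<Rightarrow> nat \<Rightarrow> nat \<Rightarrow> 'b" where
  "mat2 a b c d = (\<lambda>i j. if i = 0 then (if j = 0 then a else b) else (if j = 0 then c else d))"

definition mat2_form :: "('a::chilbert \<Rightarrow> 'a) \<Rightarrow> ('a \<Rightarrow> 'a) \<Rightarrow> ('a \<Rightarrow> 'a) \<Rightarrow> ('a \<Rightarrow> 'a) \<Rightarrow> 'a \<Rightarrow> 'a \<Rightarrow> complex" where
  "mat2_form a b c d h0 h1 = cinner h0 (a h0) + cinner h0 (b h1) + cinner h1 (c h0) + cinner h1 (d h1)"

lemma mat_pos_2_iff: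
  "mat_pos 2 (mat2 a b c d) \<longleftrightarrow>
     (\<forall>h0 h1. Im (mat2_form a b c d h0 h1) = 0 \<and> 0 \<le> Re (mat2_form a b c d h0 h1))"
proof -
  have sum: "(\<Sum>i<2. \<Sum>j<2. cinner (h i) (mat2 a b c d i j (h j))) = mat2_form a b c d (h 0) (h 1)"
    for h :: "nat \<Rightarrow> _"
    by (simp add: numeral_2_eq_2 mat2_def mat2_form_def)
  show ?thesis
    unfolding mat_pos_def sum
  proof (intro iffI allI)
    fix h0 h1
    assume "\<forall>h::nat \<Rightarrow> _. Im (mat2_form a b c d (h 0) (h 1)) = 0 \<and> 0 \<le> Re (mat2_form a b c d (h 0) (h 1))"
    from this[rule_format, of "\<lambda>i. if i = 0 then h0 else h1"]
    show "Im (mat2_form a b c d h0 h1) = 0 \<and> 0 \<le> Re (mat2_form a b c d h0 h1)" by simp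
  qed blast
qed

lemma mat_pos_1_iff_op_pos: "mat_pos (Suc 0) (\<lambda>i j. D) \<longleftrightarrow> op_pos D"
  unfolding mat_pos_def op_pos_def by (auto dest: spec[of _ "\<lambda>_. _"])

lemma completely_positive_on_mat2:
  assumes "completely_positive_on M f" "a \<in> M" "b \<in> M" "c \<in> M" "d \<in> M"
    and "mat_pos 2 (mat2 a b c d)"
  shows "mat_pos 2 (mat2 (f a) (f b) (f c) (f d))"
proof -
  have "\<forall>i<2. \<forall>j<2. mat2 a b c d i j \<in> M" using assms by (simp add: mat2_def)
  then have "mat_pos 2 (\<lambda>i j. f (mat2 a b c d i j))"
    using assms(1,6) unfolding completely_positive_on_def by blast
  moreover have "(\<lambda>i j. f (mat2 a b c d i j)) = mat2 (f a) (f b) (f c) (f d)"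
    by (simp add: mat2_def fun_eq_iff)
  ultimately show ?thesis by simp
qed

lemma ucp_on_mono:
  assumes vn: "von_neumann_algebra M" and f: "ucp_on M f" and A: "A \<in> M" and B: "B \<in> M"
    and le: "op_le A B"
  shows "op_le (f A) (f B)"
proof -
  have "mat_pos (Suc 0) (\<lambda>i j. op_diff B A)"
    using le by (simp add: mat_pos_1_iff_op_pos op_le_def)
  with ucp_on_completely_positive[OF f] vn_diff[OF vn B A]
  have "mat_pos (Suc 0) (\<lambda>i j. f (op_diff B A))"
    unfolding completely_positive_on_def by auto
  then show ?thesis by (simp add: mat_pos_1_iff_op_pos op_le_def ucp_on_diff[OF vn f B A])
qed

text \<open>A form that vanishes on the diagonal vanishes identically: polarize with \<open>h + k\<close> and \<open>h + \<i> k\<close>.\<close>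

lemma op_le_antisym:
  assumes A: "bounded_op (A::'a::chilbert \<Rightarrow> 'a)" and B: "bounded_op B"
    and "op_le A B" and "op_le B A"
  shows "A = B"
proof -
  define D where "D x = B x - A x" for x
  have D_add: "D (x + y) = D x + D y" for x y
    by (simp add: D_def bounded_op_add[OF A] bounded_op_add[OF B] algebra_simps)
  have D_scaleC: "D (scaleC c x) = scaleC c (D x)" for c x
    by (simp add: D_def bounded_op_scaleC[OF A] bounded_op_scaleC[OF B] scaleC_diff_right)
  have diag: "cinner h (D h) = 0" for h
  proof -
    have "Im (cinner h (D h)) = 0" "0 \<le> Re (cinner h (D h))"
      using \<open>op_le A B\<close> unfolding op_le_def op_pos_def op_diff_def D_def by auto
    moreover have "0 \<le> - Re (cinner h (D h))"
      using \<open>op_le B A\<close> unfolding op_le_def op_pos_def op_diff_def D_def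
      by (metis cinner_diff_right minus_diff_eq uminus_complex.sel(1))
    ultimately show ?thesis by (simp add: complex_eq_iff)
  qed
  have polar: "cinner h (D k) + cinner k (D h) = 0" for h k
    using diag[of "h + k"] diag[of h] diag[of k]
    by (simp add: D_add cinner_add_left cinner_add_right add_ac)
  have "cinner h (D k) = 0" for h k
  proof -
    have "\<i> * cinner h (D k) - \<i> * cinner k (D h) = 0"
      using polar[of h "scaleC \<i> k"] by (simp add: D_scaleC cinner_scaleC_right cinner_scaleC_left)
    then have "cinner h (D k) = cinner k (D h)" by (simp add: right_diff_distrib[symmetric])
    with polar[of h k] show ?thesis by simp
  qed
  then have "D k = 0" for k by (metis cinner_eqI cinner_zero_right)
  then show ?thesis by (simp add: D_def fun_eq_iff)
qed

lemma mat_pos_2_adj: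
  assumes pos: "mat_pos 2 (mat2 a b c d)"
    and ab: "bounded_op a" "bounded_op b" and cd: "bounded_op c" "bounded_op d"
  shows "adj b = c"
proof -
  have Im_form: "Im (mat2_form a b c d h0 h1) = 0" for h0 h1
    using pos unfolding mat_pos_2_iff by blast
  have Im_diag: "Im (cinner h (a h)) = 0" "Im (cinner h (d h)) = 0" for h
    using Im_form[of h 0] Im_form[of 0 h]
    by (simp_all add: mat2_form_def bounded_op_zero ab cd)
  have offdiag: "Im (cinner h0 (b h1) + cinner h1 (c h0)) = 0" for h0 h1
    using Im_form[of h0 h1] Im_diag[of h0] Im_diag[of h1] by (simp add: mat2_form_def)
  have conj: "cinner h0 (b h1) = cnj (cinner h1 (c h0))" for h0 h1
    using offdiag[of h0 h1] offdiag[of h0 "scaleC \<i> h1"]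
    by (simp add: complex_eq_iff bounded_op_scaleC ab cinner_scaleC_right cinner_scaleC_left)
  have "cinner (b x) y = cinner x (c y)" for x y
    using conj[of y x] cinner_commute[of "b x" y] by simp
  then show ?thesis by (rule adj_unique)
qed

text \<open>UCP maps are \<open>*\<close>-preserving: the scalar \<open>c = K + 1\<close> (with \<open>K\<close> a bound for \<open>\<parallel>x h\<parallel>\<^sup>2 / \<parallel>h\<parallel>\<^sup>2\<close>)
  makes \<open>[[c, x], [x\<^sup>*, c]]\<close> positive, and \<open>f\<close> fixes the diagonal.\<close>

lemma ucp_on_adj:
  fixes M :: "('a::chilbert \<Rightarrow> 'a) set"
  assumes vn: "von_neumann_algebra M" and f: "ucp_on M f" and x: "x \<in> M"
  shows "f (adj x) = adj (f x)"
proof -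
  have bx: "bounded_op x" by (rule vn_bounded[OF vn x])
  obtain K where K: "0 \<le> K" "\<And>h. sq_cnorm (x h) \<le> K * sq_cnorm h"
    using bounded_op_sq_cnorm_bound[OF bx] by blast
  define c where "c = K + 1"
  define cI :: "'a \<Rightarrow> 'a" where "cI = op_scale (complex_of_real c) id"
  have cI: "cI \<in> M" unfolding cI_def by (rule vn_scale[OF vn vn_id[OF vn]])
  have f_cI: "f cI = cI" unfolding cI_def by (simp add: ucp_on_scale[OF f vn_id[OF vn]] ucp_on_id[OF f])
  have cI_form: "cinner h (cI h) = complex_of_real (c * sq_cnorm h)" for h
    by (simp add: cI_def op_scale_def cinner_scaleC_right cinner_self)
  have "mat_pos 2 (mat2 cI x (adj x) cI)"
    unfolding mat_pos_2_iff
  proof (intro allI)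
    fix h0 h1
    have "cinner h1 (adj x h0) = cnj (cinner h0 (x h1))"
      using cinner_adj_right[OF bx, of h1 h0] cinner_commute[of "x h1" h0] by simp
    then have form: "mat2_form cI x (adj x) cI h0 h1 =
        complex_of_real (c * sq_cnorm h0 + c * sq_cnorm h1 + 2 * Re (cinner h0 (x h1)))"
      by (simp add: mat2_form_def cI_form complex_eq_iff)
    have "(Re (cinner h0 (x h1)))\<^sup>2 \<le> sq_cnorm h0 * sq_cnorm (x h1)" by (rule cauchy_schwarz_Re)
    also have "\<dots> \<le> sq_cnorm h0 * (K * sq_cnorm h1)" by (rule mult_left_mono[OF K(2) sq_cnorm_nonneg])
    finally have "2 * \<bar>Re (cinner h0 (x h1))\<bar> \<le> sq_cnorm h0 + K * sq_cnorm h1"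
      by (rule two_abs_le_add_if_sq_le_mult) (simp_all add: sq_cnorm_nonneg K)
    moreover have "0 \<le> K * sq_cnorm h0" "0 \<le> sq_cnorm h1"
      by (simp_all add: K(1) sq_cnorm_nonneg)
    ultimately have "0 \<le> c * sq_cnorm h0 + c * sq_cnorm h1 + 2 * Re (cinner h0 (x h1))"
      using abs_ge_minus_self[of "Re (cinner h0 (x h1))"] unfolding c_def distrib_right by linarith
    then show "Im (mat2_form cI x (adj x) cI h0 h1) = 0 \<and> 0 \<le> Re (mat2_form cI x (adj x) cI h0 h1)"
      unfolding form by simp
  qed
  from completely_positive_on_mat2[OF ucp_on_completely_positive[OF f] cI x vn_adj[OF vn x] cI this]
  have "mat_pos 2 (mat2 cI (f x) (f (adj x)) cI)" by (simp add: f_cI)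
  then have "adj (f x) = f (adj x)"
    by (rule mat_pos_2_adj) (auto intro: vn_bounded[OF vn] ucp_on_mem[OF f] vn_adj[OF vn] cI x)
  then show ?thesis by simp
qed

section \<open>The multiplicative domain\<close>

lemma kadison_schwarz:
  fixes M :: "('a::chilbert \<Rightarrow> 'a) set"
  assumes vn: "von_neumann_algebra M" and f: "ucp_on M f" and x: "x \<in> M"
  shows "op_le (adj (f x) \<circ> f x) (f (adj x \<circ> x))"
proof -
  have bx: "bounded_op x" by (rule vn_bounded[OF vn x])
  have ax: "adj x \<in> M" by (rule vn_adj[OF vn x])
  have "mat_pos 2 (mat2 (adj x \<circ> x) (adj x) x id)"
    unfolding mat_pos_2_iff
  proof (intro allI)
    fix h0 h1
    have "mat2_form (adj x \<circ> x) (adj x) x id h0 h1 = cinner (x h0 + h1) (x h0 + h1)"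
      by (simp add: mat2_form_def cinner_adj_right[OF bx, symmetric] cinner_add_left cinner_add_right add_ac)
    then show "Im (mat2_form (adj x \<circ> x) (adj x) x id h0 h1) = 0 \<and>
        0 \<le> Re (mat2_form (adj x \<circ> x) (adj x) x id h0 h1)"
      by (simp add: cinner_self sq_cnorm_nonneg)
  qed
  from completely_positive_on_mat2[OF ucp_on_completely_positive[OF f] vn_comp[OF vn ax x] ax x vn_id[OF vn] this]
  have pos: "mat_pos 2 (mat2 (f (adj x \<circ> x)) (adj (f x)) (f x) id)"
    by (simp add: ucp_on_id[OF f] ucp_on_adj[OF vn f x])
  have bfx: "bounded_op (f x)" by (rule vn_bounded[OF vn ucp_on_mem[OF f x]])
  show ?thesis unfolding op_le_def op_pos_def
  proof
    fix u
    have "mat2_form (f (adj x \<circ> x)) (adj (f x)) (f x) id u (- f x u) =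
        cinner u (op_diff (f (adj x \<circ> x)) (adj (f x) \<circ> f x) u)"
      by (simp add: mat2_form_def op_diff_def cinner_diff_right cinner_adj_right[OF bfx, symmetric]
          cinner_minus_left cinner_minus_right)
    with pos show "Im (cinner u (op_diff (f (adj x \<circ> x)) (adj (f x) \<circ> f x) u)) = 0 \<and>
        0 \<le> Re (cinner u (op_diff (f (adj x \<circ> x)) (adj (f x) \<circ> f x) u))"
      unfolding mat_pos_2_iff by metis
  qed
qed

lemma schwarz_equality_absorbed:
  fixes M :: "('a::chilbert \<Rightarrow> 'a) set"
  assumes vn: "von_neumann_algebra M" and phi: "ucp_on M \<phi>" and psi: "ucp_on M \<psi>"
    and idem: "\<forall>x\<in>M. \<psi> (\<psi> x) = \<psi> x" and absorb: "\<forall>x\<in>M. \<psi> (\<phi> x) = \<psi> x"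
    and y: "y \<in> M" and eq: "\<psi> (adj y \<circ> y) = \<psi> (adj (\<psi> y) \<circ> \<psi> y)"
  shows "\<psi> (adj (\<phi> y) \<circ> \<phi> y) = \<psi> (adj (\<psi> (\<phi> y)) \<circ> \<psi> (\<phi> y))"
proof -
  define z where "z = \<phi> y"
  have z: "z \<in> M" unfolding z_def by (rule ucp_on_mem[OF phi y])
  have psi_z: "\<psi> z = \<psi> y" using absorb y by (simp add: z_def)
  have sq_mem: "adj v \<circ> v \<in> M" if "v \<in> M" for v by (rule vn_comp[OF vn vn_adj[OF vn that] that])
  have "op_le (\<psi> (adj z \<circ> z)) (\<psi> (\<phi> (adj y \<circ> y)))"
    unfolding z_def
    by (rule ucp_on_mono[OF vn psi sq_mem[OF ucp_on_mem[OF phi y]] ucp_on_mem[OF phi sq_mem[OF y]]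
          kadison_schwarz[OF vn phi y]])
  then have upper: "op_le (\<psi> (adj z \<circ> z)) (\<psi> (adj y \<circ> y))"
    using absorb sq_mem[OF y] by simp
  have "op_le (\<psi> (adj (\<psi> z) \<circ> \<psi> z)) (\<psi> (\<psi> (adj z \<circ> z)))"
    by (rule ucp_on_mono[OF vn psi sq_mem[OF ucp_on_mem[OF psi z]] ucp_on_mem[OF psi sq_mem[OF z]]
          kadison_schwarz[OF vn psi z]])
  then have lower: "op_le (\<psi> (adj y \<circ> y)) (\<psi> (adj z \<circ> z))"
    using idem sq_mem[OF z] eq by (simp add: psi_z)
  have "\<psi> (adj z \<circ> z) = \<psi> (adj y \<circ> y)"
    using op_le_antisym[OF _ _ upper lower] vn_bounded[OF vn ucp_on_mem[OF psi sq_mem]] z y by blast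
  then show ?thesis using eq by (simp add: z_def psi_z[unfolded z_def])
qed

lemma mult_dom_invariant:
  fixes M :: "('a::chilbert \<Rightarrow> 'a) set"
  assumes vn: "von_neumann_algebra M" and phi: "ucp_on M \<phi>" and psi: "ucp_on M \<psi>"
    and idem: "\<forall>x\<in>M. \<psi> (\<psi> x) = \<psi> x" and absorb: "\<forall>x\<in>M. \<psi> (\<phi> x) = \<psi> x"
    and y: "y \<in> mult_dom M \<psi>"
  shows "\<phi> y \<in> mult_dom M \<psi>"
proof -
  have yM: "y \<in> M" using y by (simp add: mult_dom_def)
  have adj_yM: "adj y \<in> M" by (rule vn_adj[OF vn yM])
  have psi_adj: "\<psi> (adj v) = adj (\<psi> v)" if "v \<in> M" for v by (rule ucp_on_adj[OF vn psi that])
  have adj_adj_M: "adj (adj v) = v" if "v \<in> M" for v by (rule adj_adj[OF vn_bounded[OF vn that]])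
  have phi_yM: "\<phi> y \<in> M" by (rule ucp_on_mem[OF phi yM])
  note schwarz = schwarz_equality_absorbed[OF vn phi psi idem absorb]
  have "\<psi> (adj (\<phi> y) \<circ> \<phi> y) = \<psi> (adj (\<psi> (\<phi> y)) \<circ> \<psi> (\<phi> y))"
    by (rule schwarz[OF yM]) (use y in \<open>simp add: mult_dom_def ce_prod_def\<close>)
  moreover have "\<psi> (adj (\<phi> (adj y)) \<circ> \<phi> (adj y)) = \<psi> (adj (\<psi> (\<phi> (adj y))) \<circ> \<psi> (\<phi> (adj y)))"
    by (rule schwarz[OF adj_yM])
      (use y in \<open>simp add: mult_dom_def ce_prod_def psi_adj yM adj_adj_M ucp_on_mem[OF psi yM]\<close>)
  moreover have "\<phi> (adj y) = adj (\<phi> y)" by (rule ucp_on_adj[OF vn phi yM])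
  ultimately show ?thesis
    using phi_yM ucp_on_mem[OF psi phi_yM]
    by (simp add: mult_dom_def ce_prod_def psi_adj adj_adj_M)
qed

theorem claim2:
  fixes M :: "('a::chilbert \<Rightarrow> 'a) set"
    and \<phi> \<psi> :: "('a \<Rightarrow> 'a) \<Rightarrow> ('a \<Rightarrow> 'a)"
  assumes "von_neumann_algebra M"
    and "ucp_on M \<phi>" and "normal_on M \<phi>"
    and "ucp_on M \<psi>"
    and "\<forall>x\<in>M. \<psi> (\<psi> x) = \<psi> x"
    and "\<psi> ` M = fixed_points M \<phi>"
    and "\<forall>x\<in>M. \<phi> (\<psi> x) = \<psi> x \<and> \<psi> (\<phi> x) = \<psi> x"
    and "\<forall>x\<in>fixed_points M \<phi>. \<psi> x = x"
  shows "fixed_points M \<phi> \<subseteq> mult_dom M \<psi> \<and> \<phi> ` mult_dom M \<psi> \<subseteq> mult_dom M \<psi>"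
proof
  show "fixed_points M \<phi> \<subseteq> mult_dom M \<psi>"
    using assms(8) by (auto simp: fixed_points_def mult_dom_def ce_prod_def)
  have "\<forall>x\<in>M. \<psi> (\<phi> x) = \<psi> x" using assms(7) by blast
  then show "\<phi> ` mult_dom M \<psi> \<subseteq> mult_dom M \<psi>"
    using mult_dom_invariant[OF assms(1,2,4,5)] by blast
qed

end
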